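(* Let $n\ge1$, let $S=\{a_1^{r_1},\dots,a_m^{r_m}\}$ be a multiset of elements of $[n]$ with $a_1<\dots<a_m$ and multiplicities $r_i\ge1$, and let $T\subseteq[n]$ be a set with $|T|=|S|=r_1+\dots+r_m$. For $1\le i\le m$ let $h(i)=|\{j\in T: j>a_i\}|-|\{j\in S: j>a_i\}|$ (elements of $S$ counted with multiplicity). Let $LP_n(S,T)$ be the set of linked partitions $\pi$ of $[n]$ with $\mathrm{left}(\pi)=S$ and $\mathrm{right}(\pi)=T$. Then $$\sum_{\pi\in LP_n(S,T)}x^{cr_2(\pi)}y^{ne_2(\pi)}=\sum_{\pi\in LP_n(S,T)}x^{ne_2(\pi)}y^{cr_2(\pi)}=\prod_{i=1}^m y^{r_ih(i)-r_i^2}\left.{h(i)\brack r_i}_q\right|_{q=x/y},$$ where ${a\brack b}_q=\frac{(q^a-1)(q^a-q)\cdots(q^a-q^{b-1})}{(q^b-1)(q^b-q)\cdots(q^b-q^{b-1})}$ is the $q$-binomial coefficient (equal to $0$ when $0\le a<b$).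
   Context: Two finite sets of integers $E,F$ are nearly disjoint if for every $i\in E\cap F$ either ($i=\min(E)$, $|E|>1$, $i\ne\min(F)$) or ($i=\min(F)$, $|F|>1$, $i\ne\min(E)$). A linked partition of $[n]$ is a set of nonempty subsets (blocks) of $[n]$ with union $[n]$, any two distinct blocks nearly disjoint. The arcs of a linked partition $\pi$ are the pairs $(i_1,j)$ where $i_1=\min(E)$ and $j\in E\setminus\{i_1\}$ for some block $E$ with $|E|\ge2$. $\mathrm{left}(\pi)$ is the multiset of left endpoints $i_1$ of arcs (one copy per arc) and $\mathrm{right}(\pi)$ the multiset (in fact a set) of right endpoints $j$ of arcs. Two arcs $(i_1,j_1),(i_2,j_2)$ form a 2-crossing if $i_1<i_2<j_1<j_2$ and a 2-nesting if $i_1<i_2<j_2<j_1$; $cr_2(\pi)$ and $ne_2(\pi)$ denote the numbers of 2-crossings and 2-nestings of $\pi$. *)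

theory Defs
  imports Complex_Main "HOL-Library.Multiset" "HOL-Computational_Algebra.Polynomial"
begin

definition nearly_disjoint :: "nat set \<Rightarrow> nat set \<Rightarrow> bool" where
  "nearly_disjoint E F \<longleftrightarrow>
     (\<forall>i \<in> E \<inter> F. (i = Min E \<and> card E > 1 \<and> i \<noteq> Min F) \<or>
                    (i = Min F \<and> card F > 1 \<and> i \<noteq> Min E))"

definition linked_partition :: "nat \<Rightarrow> nat set set \<Rightarrow> bool" where
  "linked_partition n \<pi> \<longleftrightarrow>
     (\<forall>E \<in> \<pi>. E \<noteq> {} \<and> E \<subseteq> {1..n}) \<and> \<Union>\<pi> = {1..n} \<and>
     (\<forall>E \<in> \<pi>. \<forall>F \<in> \<pi>. E \<noteq> F \<longrightarrow> nearly_disjoint E F)"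

definition arcs :: "nat set set \<Rightarrow> (nat \<times> nat) set" where
  "arcs \<pi> = {(Min E, j) | E j. E \<in> \<pi> \<and> card E \<ge> 2 \<and> j \<in> E - {Min E}}"

definition lefts :: "nat set set \<Rightarrow> nat multiset" where
  "lefts \<pi> = image_mset fst (mset_set (arcs \<pi>))"

definition rights :: "nat set set \<Rightarrow> nat multiset" where
  "rights \<pi> = image_mset snd (mset_set (arcs \<pi>))"

definition cr2 :: "nat set set \<Rightarrow> nat" where
  "cr2 \<pi> = card {(e, f). e \<in> arcs \<pi> \<and> f \<in> arcs \<pi> \<and>
                   fst e < fst f \<and> fst f < snd e \<and> snd e < snd f}"

definition ne2 :: "nat set set \<Rightarrow> nat" where
  "ne2 \<pi> = card {(e, f). e \<in> arcs \<pi> \<and> f \<in> arcs \<pi> \<and>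
                   fst e < fst f \<and> fst f < snd f \<and> snd f < snd e}"

definition LP :: "nat \<Rightarrow> nat multiset \<Rightarrow> nat set \<Rightarrow> nat set set set" where
  "LP n S T = {\<pi>. linked_partition n \<pi> \<and> lefts \<pi> = S \<and> rights \<pi> = mset_set T}"

text \<open>q-binomial coefficient as a polynomial in q: the quotient of the two products
  in the paper (the division is exact).\<close>
definition qbinom :: "nat \<Rightarrow> nat \<Rightarrow> 'a::field poly" where
  "qbinom a b = (\<Prod>k<b. monom 1 a - monom 1 k) div (\<Prod>k<b. monom 1 b - monom 1 k)"

end

theory Submission
  imports Defs
begin

(* Recording a linked partition by its arcs identifies LP_n(S,T) with the sets of arcs (i, j),
  i < j, whose left endpoints form the multiset S and whose right endpoints are the elements of T,
  each used once.  Let a be the largest left endpoint and r its multiplicity.  Its arcs go to an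
  r-subset R of V = {j in T. j > a}; every other element v of V is the right end of an arc (i, v)
  with i < a, and such an arc crosses (a, j) iff v < j and nests over it iff j < v.  So removing
  the arcs at a divides x^cr y^ne by x^inv(R) y^coinv(R), where inv and coinv count the pairs
  v in V - R, j in R with v < j resp. j < v, and the sum of x^inv(R) y^coinv(R) over all
  r-subsets R of V is the homogeneous Gaussian coefficient y^(r(h-r)) [h, r] at q = x/y, with
  h = |V| = h(a).  The numbers h(c), c < a, are not changed by the removal, so induction on |S|
  gives the product.  The Gaussian coefficient is symmetric in x and y (reverse the order of V),
  which gives the version with cr and ne exchanged. *)

section \<open>Gaussian polynomials\<close>

fun gauss_poly :: "nat \<Rightarrow> nat \<Rightarrow> 'a::comm_semiring_1 poly" where
  "gauss_poly h 0 = 1"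
| "gauss_poly 0 (Suc r) = 0"
| "gauss_poly (Suc h) (Suc r) = gauss_poly h r + monom 1 (Suc r) * gauss_poly h (Suc r)"

lemma gauss_poly_eq_0: "h < r \<Longrightarrow> gauss_poly h r = 0"
  by (induction h r rule: gauss_poly.induct) auto

definition qfalling :: "nat \<Rightarrow> nat \<Rightarrow> 'a::comm_ring_1 poly" where
  "qfalling a r = (\<Prod>k<r. monom 1 a - monom 1 k)"

lemma qfalling_Suc: "qfalling a (Suc r) = qfalling a r * (monom 1 a - monom 1 r)"
  by (simp add: qfalling_def)

lemma qfalling_0_Suc: "qfalling 0 (Suc r) = 0"
  unfolding qfalling_def by (intro prod_zero bexI[of _ 0]) simp_all

lemma monom_one_Suc: "monom (1::'a::comm_semiring_1) (Suc k) = monom 1 1 * monom 1 k"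
  by (simp add: mult_monom)

lemma qfalling_Suc_Suc:
  "qfalling (Suc a) (Suc r) = (monom 1 (Suc a) - 1) * monom 1 r * qfalling a r"
proof -
  have "qfalling (Suc a) (Suc r) =
      (monom 1 (Suc a) - monom 1 0) * (\<Prod>k<r. monom 1 1 * (monom 1 a - monom 1 k))"
    unfolding qfalling_def prod.lessThan_Suc_shift
    by (simp only: monom_one_Suc right_diff_distrib)
  also have "\<dots> = (monom 1 (Suc a) - 1) * monom 1 r * qfalling a r"
    by (simp add: prod.distrib qfalling_def monom_power monom_0 one_pCons)
  finally show ?thesis .
qed

lemma qfalling_self_nonzero: "qfalling r r \<noteq> (0 :: 'a::idom poly)"
  unfolding qfalling_def by (auto simp: prod_zero_iff monom_eq_iff')

lemma qfalling_mult_gauss_poly: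
  "qfalling r r * gauss_poly h r = (qfalling h r :: 'a::comm_ring_1 poly)"
proof (induction h arbitrary: r)
  case 0
  then show ?case by (cases r) (simp_all add: qfalling_0_Suc)
next
  case (Suc h)
  show ?case
  proof (cases r)
    case 0
    then show ?thesis by (simp add: qfalling_def)
  next
    case (Suc s)
    have IH_s: "qfalling (Suc s) (Suc s) * gauss_poly h s =
        (monom 1 (Suc s) - 1) * monom 1 s * (qfalling h s :: 'a poly)"
      by (simp only: qfalling_Suc_Suc mult.assoc Suc.IH)
    have IH_Suc_s: "qfalling (Suc s) (Suc s) * gauss_poly h (Suc s) =
        qfalling h s * (monom 1 h - monom 1 s :: 'a poly)"
      using Suc.IH[of "Suc s"] by (simp only: qfalling_Suc)
    have "(qfalling r r * gauss_poly (Suc h) r :: 'a poly) =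
        qfalling (Suc s) (Suc s) * gauss_poly h s
        + monom 1 (Suc s) * (qfalling (Suc s) (Suc s) * gauss_poly h (Suc s))"
      by (simp add: Suc algebra_simps)
    also have "\<dots> = (monom 1 (Suc s) - 1) * monom 1 s * qfalling h s
        + monom 1 (Suc s) * (qfalling h s * (monom 1 h - monom 1 s))"
      by (simp only: IH_s IH_Suc_s)
    also have "\<dots> = (monom 1 (Suc h) - 1) * monom 1 s * qfalling h s"
      unfolding monom_one_Suc by (simp add: algebra_simps)
    finally show ?thesis
      by (simp add: Suc qfalling_Suc_Suc)
  qed
qed

lemma qbinom_eq_gauss_poly: "qbinom h r = gauss_poly h r"
proof -
  have "qbinom h r = (qfalling r r * gauss_poly h r) div qfalling r r"
    by (simp add: qbinom_def qfalling_mult_gauss_poly flip: qfalling_def)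
  then show ?thesis
    by (simp add: qfalling_self_nonzero)
qed

fun homog_gauss :: "'a::comm_semiring_1 \<Rightarrow> 'a \<Rightarrow> nat \<Rightarrow> nat \<Rightarrow> 'a" where
  "homog_gauss x y h 0 = 1"
| "homog_gauss x y 0 (Suc r) = 0"
| "homog_gauss x y (Suc h) (Suc r) = y ^ (h - r) * homog_gauss x y h r + x ^ Suc r * homog_gauss x y h (Suc r)"

lemma homog_gauss_eq_0: "h < r \<Longrightarrow> homog_gauss x y h r = 0"
  by (induction x y h r rule: homog_gauss.induct) auto

lemma homog_gauss_eq_gauss_poly:
  fixes x y :: "'a::field"
  assumes "y \<noteq> 0"
  shows "homog_gauss x y h r = y ^ (r * (h - r)) * poly (gauss_poly h r) (x / y)"
proof (induction h r rule: gauss_poly.induct)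
  case (3 h r)
  have "homog_gauss x y (Suc h) (Suc r) = y ^ (h - r) * (y ^ (r * (h - r)) * poly (gauss_poly h r) (x / y))
      + x ^ Suc r * (y ^ (Suc r * (h - Suc r)) * poly (gauss_poly h (Suc r)) (x / y))"
    by (simp only: homog_gauss.simps 3)
  also have "\<dots> = y ^ (Suc r * (Suc h - Suc r)) * poly (gauss_poly (Suc h) (Suc r)) (x / y)"
  proof (cases "r < h")
    case True
    then obtain d where h: "h = Suc (r + d)"
      using less_iff_Suc_add by blast
    have "Suc r * (Suc h - Suc r) = Suc d + r * Suc d" "Suc r * (h - Suc r) = d + r * d"
      using h by simp_all
    then show ?thesis
      using assms h by (simp add: poly_monom power_add power_divide field_simps)
  next
    case False
    then show ?thesis
      by (simp add: gauss_poly_eq_0)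
  qed
  finally show ?case .
qed simp_all

lemma homog_gauss_eq_qbinom:
  fixes x y :: "'a::field" and k :: int
  assumes "y \<noteq> 0" "r > 0"
  shows "homog_gauss x y (nat k) r =
    y powi (int r * k - int r ^ 2) * (if k < 0 then 0 else poly (qbinom (nat k) r) (x / y))"
proof (cases "int r \<le> k")
  case True
  then obtain h where k: "k = int h" and "r \<le> h"
    by (metis nat_int_comparison(3) nonneg_int_cases of_nat_0_le_iff order.trans)
  then have "int r * k - int r ^ 2 = int (r * (h - r))"
    by (simp add: power2_eq_square of_nat_diff algebra_simps)
  then have "y powi (int r * k - int r ^ 2) = y ^ (r * (h - r))"
    by (simp only: power_int_of_nat)
  then show ?thesis
    using assms k by (simp add: homog_gauss_eq_gauss_poly qbinom_eq_gauss_poly)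
next
  case False
  then show ?thesis
    using assms by (simp add: homog_gauss_eq_0 qbinom_eq_gauss_poly gauss_poly_eq_0)
qed

section \<open>Inversions of subsets\<close>

definition k_subsets :: "'a set \<Rightarrow> nat \<Rightarrow> 'a set set" where
  "k_subsets V r = {R. R \<subseteq> V \<and> card R = r}"

definition outside_below :: "'a::linorder set \<Rightarrow> 'a set \<Rightarrow> nat" where
  "outside_below V R = (\<Sum>j\<in>R. card {v \<in> V - R. v < j})"

definition outside_above :: "'a::linorder set \<Rightarrow> 'a set \<Rightarrow> nat" where
  "outside_above V R = (\<Sum>j\<in>R. card {v \<in> V - R. j < v})"

lemma finite_k_subsets: "finite V \<Longrightarrow> finite (k_subsets V r)"
  unfolding k_subsets_def by (rule finite_subset[of _ "Pow V"]) auto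

lemma k_subsets_0: "finite V \<Longrightarrow> k_subsets V 0 = {{}}"
  unfolding k_subsets_def by (auto dest: finite_subset)

lemma k_subsets_insert_Suc:
  assumes "finite V" "m \<notin> V"
  shows "k_subsets (insert m V) (Suc r) = insert m ` k_subsets V r \<union> k_subsets V (Suc r)"
proof (intro equalityI subsetI)
  fix R assume R: "R \<in> k_subsets (insert m V) (Suc r)"
  then have "finite R"
    using assms(1) finite_subset by (auto simp: k_subsets_def)
  show "R \<in> insert m ` k_subsets V r \<union> k_subsets V (Suc r)"
  proof (cases "m \<in> R")
    case True
    then have "R = insert m (R - {m})" "R - {m} \<in> k_subsets V r"
      using R \<open>finite R\<close> assms(2) by (auto simp: k_subsets_def)
    then show ?thesis by blast
  next
    case False
    then show ?thesis using R by (auto simp: k_subsets_def)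
  qed
next
  fix R assume "R \<in> insert m ` k_subsets V r \<union> k_subsets V (Suc r)"
  then show "R \<in> k_subsets (insert m V) (Suc r)"
  proof
    assume "R \<in> insert m ` k_subsets V r"
    then obtain R' where "R = insert m R'" "R' \<subseteq> V" "card R' = r"
      by (auto simp: k_subsets_def)
    moreover have "finite R'" "m \<notin> R'"
      using assms finite_subset \<open>R' \<subseteq> V\<close> by blast+
    ultimately show ?thesis
      by (auto simp: k_subsets_def)
  qed (auto simp: k_subsets_def)
qed

lemma outside_insert_min_in:
  assumes "finite V" "\<forall>v\<in>V. m < v" "R \<subseteq> V"
  shows "outside_below (insert m V) (insert m R) = outside_below V R"
    and "outside_above (insert m V) (insert m R) = outside_above V R + card (V - R)"
proof -
  have R: "finite R" "m \<notin> R" "m \<notin> V"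
    using assms finite_subset by auto
  have "{v \<in> insert m V - insert m R. v < j} = {v \<in> V - R. v < j}" for j
    using R(2) assms(2) by auto
  moreover have "card {v \<in> V - R. v < m} = 0"
    using assms(2) by (auto simp: card_eq_0_iff)
  ultimately show "outside_below (insert m V) (insert m R) = outside_below V R"
    using R by (simp add: outside_below_def)
  have "{v \<in> insert m V - insert m R. j < v} = {v \<in> V - R. j < v}" for j
    using R by auto
  moreover have "{v \<in> V - R. m < v} = V - R"
    using assms(2) by auto
  ultimately show "outside_above (insert m V) (insert m R) = outside_above V R + card (V - R)"
    using R by (simp add: outside_above_def)
qed

lemma outside_insert_min_notin:
  assumes "finite V" "\<forall>v\<in>V. m < v" "R \<subseteq> V"
  shows "outside_below (insert m V) R = outside_below V R + card R"
    and "outside_above (insert m V) R = outside_above V R"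
proof -
  have R: "finite R" "m \<notin> R" "m \<notin> V"
    using assms finite_subset by auto
  have "card {v \<in> insert m V - R. v < j} = card {v \<in> V - R. v < j} + 1" if "j \<in> R" for j
  proof -
    have "{v \<in> insert m V - R. v < j} = insert m {v \<in> V - R. v < j}"
      using that assms(2,3) R(2) by auto
    then show ?thesis
      using assms(1) R(3) by simp
  qed
  then show "outside_below (insert m V) R = outside_below V R + card R"
    by (simp add: outside_below_def sum_Suc)
  have "{v \<in> insert m V - R. j < v} = {v \<in> V - R. j < v}" if "j \<in> R" for j
    using that assms(2,3) by (auto dest: less_asym)
  then show "outside_above (insert m V) R = outside_above V R"
    by (simp add: outside_above_def)
qed

lemma sum_k_subsets_outside:
  fixes x y :: "'b::comm_semiring_1"
  assumes "finite V"
  shows "(\<Sum>R\<in>k_subsets V r. x ^ outside_below V R * y ^ outside_above V R) = homog_gauss x y (card V) r"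
  using assms
proof (induction V arbitrary: r rule: finite_linorder_min_induct)
  case empty
  have "k_subsets ({} :: 'a set) r = (if r = 0 then {{}} else {})"
    by (auto simp: k_subsets_def)
  then show ?case
    by (cases r) (simp_all add: outside_below_def outside_above_def)
next
  case (insert m V)
  let ?f = "\<lambda>V R. x ^ outside_below V R * y ^ outside_above V R"
  have m: "m \<notin> V"
    using insert.hyps(2) by blast
  show ?case
  proof (cases r)
    case 0
    then show ?thesis
      using insert.hyps(1) by (simp add: k_subsets_0 outside_below_def outside_above_def)
  next
    case (Suc s)
    have in_m: "?f (insert m V) (insert m R) = y ^ (card V - s) * ?f V R" if "R \<in> k_subsets V s" for R
      using that insert.hyps(1,2) outside_insert_min_in[OF insert.hyps(1,2)]
      by (auto simp: k_subsets_def card_Diff_subset finite_subset power_add mult_ac)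
    have notin_m: "?f (insert m V) R = x ^ Suc s * ?f V R" if "R \<in> k_subsets V (Suc s)" for R
      using that outside_insert_min_notin[OF insert.hyps(1,2)]
      by (auto simp: k_subsets_def power_add mult_ac)
    have "(\<Sum>R\<in>k_subsets (insert m V) r. ?f (insert m V) R) =
        (\<Sum>R\<in>insert m ` k_subsets V s. ?f (insert m V) R) + (\<Sum>R\<in>k_subsets V (Suc s). ?f (insert m V) R)"
      unfolding Suc k_subsets_insert_Suc[OF insert.hyps(1) m]
      by (rule sum.union_disjoint) (auto simp: finite_k_subsets insert.hyps(1) k_subsets_def m)
    also have "(\<Sum>R\<in>insert m ` k_subsets V s. ?f (insert m V) R) =
        (\<Sum>R\<in>k_subsets V s. ?f (insert m V) (insert m R))"
      using m by (intro sum.reindex_cong[of "insert m"]) (auto simp: inj_on_def k_subsets_def)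
    finally show ?thesis
      using m insert.hyps(1)
      by (simp add: Suc in_m notin_m insert.IH sum_distrib_left[symmetric])
  qed
qed

lemma outside_image_antimono:
  fixes f :: "'a::linorder \<Rightarrow> 'b::linorder"
  assumes inj: "inj_on f V" and anti: "\<And>u v. u \<in> V \<Longrightarrow> v \<in> V \<Longrightarrow> u < v \<Longrightarrow> f v < f u"
    and "R \<subseteq> V"
  shows "outside_below (f ` V) (f ` R) = outside_above V R"
    and "outside_above (f ` V) (f ` R) = outside_below V R"
proof -
  have less_iff: "f u < f v \<longleftrightarrow> v < u" if "u \<in> V" "v \<in> V" for u v
    using anti[OF that] anti[OF that(2,1)] inj that by (metis inj_on_eq_iff less_asym neqE)
  have diff: "f ` V - f ` R = f ` (V - R)"
    using inj assms(3) by (simp add: inj_on_image_set_diff)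
  have inj_R: "inj_on f R"
    using inj assms(3) by (rule inj_on_subset)
  have card_image_V: "card (f ` {v \<in> V - R. P v}) = card {v \<in> V - R. P v}" for P
    using inj by (rule card_image[OF inj_on_subset]) blast
  have cards: "card {w \<in> f ` V - f ` R. w < f j} = card {v \<in> V - R. j < v}"
    "card {w \<in> f ` V - f ` R. f j < w} = card {v \<in> V - R. v < j}" if "j \<in> R" for j
  proof -
    have "{w \<in> f ` V - f ` R. w < f j} = f ` {v \<in> V - R. j < v}"
      "{w \<in> f ` V - f ` R. f j < w} = f ` {v \<in> V - R. v < j}"
      using that assms(3) unfolding diff by (auto simp: less_iff)
    then show "card {w \<in> f ` V - f ` R. w < f j} = card {v \<in> V - R. j < v}"
      "card {w \<in> f ` V - f ` R. f j < w} = card {v \<in> V - R. v < j}"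
      by (simp_all only: card_image_V)
  qed
  show "outside_below (f ` V) (f ` R) = outside_above V R"
    unfolding outside_below_def outside_above_def sum.reindex[OF inj_R] comp_def
    by (rule sum.cong[OF refl]) (rule cards)
  show "outside_above (f ` V) (f ` R) = outside_below V R"
    unfolding outside_below_def outside_above_def sum.reindex[OF inj_R] comp_def
    by (rule sum.cong[OF refl]) (rule cards)
qed

lemma bij_betw_image_k_subsets:
  assumes "inj_on f V"
  shows "bij_betw (image f) (k_subsets V r) (k_subsets (f ` V) r)"
  unfolding bij_betw_def
proof
  show "inj_on (image f) (k_subsets V r)"
    using inj_on_image_Pow[OF assms] by (rule inj_on_subset) (auto simp: k_subsets_def)
  have "card (f ` R) = card R" if "R \<subseteq> V" for R
    using that assms by (auto intro: card_image inj_on_subset)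
  then show "image f ` k_subsets V r = k_subsets (f ` V) r"
    by (auto simp: k_subsets_def subset_image_iff image_mono)
qed

lemma homog_gauss_commute: "homog_gauss y x h r = homog_gauss x y h r"
proof -
  let ?V = "{..<h}" and ?f = "\<lambda>v. h - v"
  have inj: "inj_on ?f ?V"
    by (auto simp: inj_on_def)
  have anti: "?f v < ?f u" if "u \<in> ?V" "v \<in> ?V" "u < v" for u v
    using that by simp
  have "homog_gauss y x h r = (\<Sum>R\<in>k_subsets ?V r. y ^ outside_below ?V R * x ^ outside_above ?V R)"
    using sum_k_subsets_outside[of ?V y x r] by simp
  also have "\<dots> = (\<Sum>R\<in>k_subsets ?V r.
      x ^ outside_below (?f ` ?V) (?f ` R) * y ^ outside_above (?f ` ?V) (?f ` R))"
    using outside_image_antimono[OF inj anti] by (intro sum.cong) (auto simp: k_subsets_def mult.commute)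
  also have "\<dots> = (\<Sum>R\<in>k_subsets (?f ` ?V) r. x ^ outside_below (?f ` ?V) R * y ^ outside_above (?f ` ?V) R)"
    by (rule sum.reindex_bij_betw[OF bij_betw_image_k_subsets[OF inj]])
  also have "\<dots> = homog_gauss x y h r"
    by (simp add: sum_k_subsets_outside card_image[OF inj])
  finally show ?thesis .
qed

section \<open>Arc systems\<close>

definition arc_systems :: "'a::linorder multiset \<Rightarrow> 'a set \<Rightarrow> ('a \<times> 'a) set set" where
  "arc_systems S T = {A. finite A \<and> (\<forall>e\<in>A. fst e < snd e) \<and> inj_on snd A \<and>
     image_mset fst (mset_set A) = S \<and> snd ` A = T}"

lemma arc_systems_mem:
  "A \<in> arc_systems S T \<Longrightarrow> e \<in> A \<Longrightarrow> fst e \<in># S \<and> snd e \<in> T \<and> fst e < snd e"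
  unfolding arc_systems_def by force

lemma finite_arc_systems: "finite T \<Longrightarrow> finite (arc_systems S T)"
proof -
  assume "finite T"
  moreover have "arc_systems S T \<subseteq> Pow (set_mset S \<times> T)"
    using arc_systems_mem by fastforce
  ultimately show ?thesis
    by (meson finite_Pow_iff finite_SigmaI finite_set_mset finite_subset)
qed

lemma count_image_mset_fst:
  "finite A \<Longrightarrow> count (image_mset fst (mset_set A)) a = card {e \<in> A. fst e = a}"
  by (simp add: count_image_mset vimage_def Int_def conj_commute)

lemma arc_systems_insert_block:
  assumes T: "finite T" and R: "R \<in> k_subsets {j \<in> T. a < j} (count S a)"
    and A: "A \<in> arc_systems {#i \<in># S. i \<noteq> a#} (T - R)"
  shows "A \<union> {a} \<times> R \<in> arc_systems S T"
proof -
  have RT: "R \<subseteq> T" "\<forall>j\<in>R. a < j" "card R = count S a" "finite R"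
    using R T by (auto simp: k_subsets_def intro: finite_subset)
  have "finite A" and "\<forall>e\<in>A. fst e < snd e" and "inj_on snd A"
    and lefts: "image_mset fst (mset_set A) = {#i \<in># S. i \<noteq> a#}" and rights: "snd ` A = T - R"
    using A by (auto simp: arc_systems_def)
  have not_a: "fst e \<noteq> a" if "e \<in> A" for e
    using arc_systems_mem[OF A that] by simp
  have "count (image_mset fst (mset_set (A \<union> {a} \<times> R))) c = count S c" for c
  proof -
    have "{e \<in> A \<union> {a} \<times> R. fst e = c} = (if c = a then {a} \<times> R else {e \<in> A. fst e = c})"
      using not_a by auto
    then show ?thesis
      using count_image_mset_fst[of A c] lefts RT \<open>finite A\<close>
      by (auto simp: count_image_mset_fst card_cartesian_product_singleton)
  qed
  moreover have "inj_on snd (A \<union> {a} \<times> R)"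
  proof -
    have "\<forall>e\<in>A. snd e \<notin> R"
      using rights by blast
    then show ?thesis
      unfolding inj_on_Un using \<open>inj_on snd A\<close> by (auto simp: inj_on_def)
  qed
  moreover have "snd ` (A \<union> {a} \<times> R) = T"
    using rights RT(1) by (auto simp: image_Un)
  ultimately show ?thesis
    using \<open>finite A\<close> \<open>\<forall>e\<in>A. fst e < snd e\<close> RT
    by (auto simp: arc_systems_def multiset_eq_iff)
qed

lemma arc_systems_remove_block:
  assumes A: "A \<in> arc_systems S T"
  shows "{j. (a, j) \<in> A} \<in> k_subsets {j \<in> T. a < j} (count S a)"
    and "{e \<in> A. fst e \<noteq> a} \<in> arc_systems {#i \<in># S. i \<noteq> a#} (T - {j. (a, j) \<in> A})"
proof -
  have "finite A" and lt: "\<forall>e\<in>A. fst e < snd e" and inj: "inj_on snd A"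
    and lefts: "image_mset fst (mset_set A) = S" and rights: "snd ` A = T"
    using A by (auto simp: arc_systems_def)
  have "{e \<in> A. fst e = a} = {a} \<times> {j. (a, j) \<in> A}"
    by auto
  then have "card {j. (a, j) \<in> A} = count S a"
    using count_image_mset_fst[OF \<open>finite A\<close>, of a] lefts
    by (simp add: card_cartesian_product_singleton)
  moreover have "{j. (a, j) \<in> A} \<subseteq> {j \<in> T. a < j}"
    using lt rights by force
  ultimately show "{j. (a, j) \<in> A} \<in> k_subsets {j \<in> T. a < j} (count S a)"
    by (simp add: k_subsets_def)
  have "mset_set {e \<in> A. fst e \<noteq> a} = filter_mset (\<lambda>e. fst e \<noteq> a) (mset_set A)"
    using \<open>finite A\<close> by simp
  then have "image_mset fst (mset_set {e \<in> A. fst e \<noteq> a}) = {#i \<in># S. i \<noteq> a#}"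
    using lefts image_mset_filter_mset_swap[of fst "\<lambda>i. i \<noteq> a" "mset_set A"] by simp
  moreover have "snd ` {e \<in> A. fst e \<noteq> a} = T - {j. (a, j) \<in> A}"
  proof
    show "snd ` {e \<in> A. fst e \<noteq> a} \<subseteq> T - {j. (a, j) \<in> A}"
      using inj rights by (force simp: inj_on_def)
    show "T - {j. (a, j) \<in> A} \<subseteq> snd ` {e \<in> A. fst e \<noteq> a}"
      using rights by force
  qed
  ultimately show "{e \<in> A. fst e \<noteq> a} \<in> arc_systems {#i \<in># S. i \<noteq> a#} (T - {j. (a, j) \<in> A})"
    using \<open>finite A\<close> lt inj by (auto simp: arc_systems_def intro: inj_on_subset)
qed

lemma bij_betw_arc_systems_block:
  assumes "finite T"
  shows "bij_betw (\<lambda>(R, A). A \<union> {a} \<times> R)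
    (SIGMA R:k_subsets {j \<in> T. a < j} (count S a). arc_systems {#i \<in># S. i \<noteq> a#} (T - R))
    (arc_systems S T)"
proof (rule bij_betw_byWitness[where f' = "\<lambda>A. ({j. (a, j) \<in> A}, {e \<in> A. fst e \<noteq> a})"], goal_cases)
  case 1
  have "fst e \<noteq> a" if "A \<in> arc_systems {#i \<in># S. i \<noteq> a#} T'" "e \<in> A" for A T' e
    using arc_systems_mem[OF that] by simp
  then show ?case
    by fastforce
next
  case 2
  show ?case
    by auto
next
  case 3
  show ?case
    using arc_systems_insert_block[OF assms] by auto
next
  case 4
  show ?case
    using arc_systems_remove_block by blast
qed

definition crosses :: "'a::linorder \<times> 'a \<Rightarrow> 'a \<times> 'a \<Rightarrow> bool" where
  "crosses e f \<longleftrightarrow> fst e < fst f \<and> fst f < snd e \<and> snd e < snd f"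

definition nests :: "'a::linorder \<times> 'a \<Rightarrow> 'a \<times> 'a \<Rightarrow> bool" where
  "nests e f \<longleftrightarrow> fst e < fst f \<and> fst f < snd f \<and> snd f < snd e"

definition crossings :: "('a::linorder \<times> 'a) set \<Rightarrow> nat" where
  "crossings A = card {(e, f). e \<in> A \<and> f \<in> A \<and> crosses e f}"

definition nestings :: "('a::linorder \<times> 'a) set \<Rightarrow> nat" where
  "nestings A = card {(e, f). e \<in> A \<and> f \<in> A \<and> nests e f}"

lemma card_pairs_insert_block:
  fixes A :: "('a::linorder \<times> 'a) set"
  assumes "finite A" "finite R" "\<forall>e\<in>A. fst e < a" and P: "\<And>e f. P e f \<Longrightarrow> fst e < fst f"
  shows "card {(e, f). e \<in> A \<union> {a} \<times> R \<and> f \<in> A \<union> {a} \<times> R \<and> P e f} =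
    card {(e, f). e \<in> A \<and> f \<in> A \<and> P e f} + (\<Sum>j\<in>R. card {e \<in> A. P e (a, j)})"
proof -
  let ?old = "{(e, f). e \<in> A \<and> f \<in> A \<and> P e f}"
  let ?new = "(\<lambda>(j, e). (e, (a, j))) ` (SIGMA j:R. {e \<in> A. P e (a, j)})"
  have no_left: "\<not> P e f" if "e \<in> {a} \<times> R" "f \<in> A \<union> {a} \<times> R" for e f
    using that assms(3) P[of e f] by fastforce
  have "{(e, f). e \<in> A \<union> {a} \<times> R \<and> f \<in> A \<union> {a} \<times> R \<and> P e f} = ?old \<union> ?new"
  proof (intro equalityI subsetI)
    fix p assume "p \<in> {(e, f). e \<in> A \<union> {a} \<times> R \<and> f \<in> A \<union> {a} \<times> R \<and> P e f}"
    then obtain e f where "p = (e, f)" "e \<in> A" "f \<in> A \<union> {a} \<times> R" "P e f"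
      using no_left by auto
    then show "p \<in> ?old \<union> ?new"
      by force
  qed auto
  moreover have "?old \<inter> ?new = {}"
    using assms(3) by force
  moreover have "card ?new = (\<Sum>j\<in>R. card {e \<in> A. P e (a, j)})"
    using assms(1,2) by (subst card_image) (auto simp: inj_on_def card_SigmaI)
  moreover have "finite ?old"
    by (rule finite_subset[of _ "A \<times> A"]) (auto simp: assms(1))
  ultimately show ?thesis
    using assms(1,2) by (simp add: card_Un_disjoint)
qed

lemma card_filter_snd:
  assumes "inj_on snd A"
  shows "card {e \<in> A. Q (snd e)} = card {v \<in> snd ` A. Q v}"
proof -
  have "{v \<in> snd ` A. Q v} = snd ` {e \<in> A. Q (snd e)}"
    by auto
  then show ?thesis
    using assms by (simp add: card_image inj_on_subset)
qed

lemma crossings_insert_block: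
  assumes A: "A \<in> arc_systems S (T - R)" and T: "finite T"
    and left: "\<forall>e\<in>A. fst e < a" and R: "R \<subseteq> {j \<in> T. a < j}"
  shows "crossings (A \<union> {a} \<times> R) = crossings A + outside_below {j \<in> T. a < j} R"
proof -
  have "finite A" and inj: "inj_on snd A" and rights: "snd ` A = T - R"
    using A by (auto simp: arc_systems_def)
  have "card {e \<in> A. crosses e (a, j)} = card {v \<in> {j \<in> T. a < j} - R. v < j}" for j
  proof -
    have "{e \<in> A. crosses e (a, j)} = {e \<in> A. a < snd e \<and> snd e < j}"
      using left by (auto simp: crosses_def)
    moreover have "{v \<in> T - R. a < v \<and> v < j} = {v \<in> {j \<in> T. a < j} - R. v < j}"
      by auto
    ultimately show ?thesis
      using card_filter_snd[OF inj, of "\<lambda>v. a < v \<and> v < j"] rights by simp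
  qed
  moreover have "finite R"
    using R T by (auto intro: finite_subset)
  ultimately show ?thesis
    unfolding crossings_def outside_below_def
    using card_pairs_insert_block[OF \<open>finite A\<close> _ left, of R crosses]
    by (simp add: crosses_def)
qed

lemma nestings_insert_block:
  assumes A: "A \<in> arc_systems S (T - R)" and T: "finite T"
    and left: "\<forall>e\<in>A. fst e < a" and R: "R \<subseteq> {j \<in> T. a < j}"
  shows "nestings (A \<union> {a} \<times> R) = nestings A + outside_above {j \<in> T. a < j} R"
proof -
  have "finite A" and inj: "inj_on snd A" and rights: "snd ` A = T - R"
    using A by (auto simp: arc_systems_def)
  have "card {e \<in> A. nests e (a, j)} = card {v \<in> {j \<in> T. a < j} - R. j < v}" if "j \<in> R" for j
  proof -
    have "{e \<in> A. nests e (a, j)} = {e \<in> A. j < snd e}"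
      using left R that by (auto simp: nests_def)
    moreover have "{v \<in> T - R. j < v} = {v \<in> {j \<in> T. a < j} - R. j < v}"
      using R that by auto
    ultimately show ?thesis
      using card_filter_snd[OF inj, of "\<lambda>v. j < v"] rights by simp
  qed
  moreover have "finite R"
    using R T by (auto intro: finite_subset)
  ultimately show ?thesis
    unfolding nestings_def outside_above_def
    using card_pairs_insert_block[OF \<open>finite A\<close> _ left, of R nests]
    by (simp add: nests_def)
qed

lemma sum_arc_systems_remove_max:
  fixes x y :: "'b::comm_semiring_1"
  assumes T: "finite T" and max: "\<forall>i\<in>#S. i \<le> a"
  shows "(\<Sum>A\<in>arc_systems S T. x ^ crossings A * y ^ nestings A) =
    (\<Sum>R\<in>k_subsets {j \<in> T. a < j} (count S a).
       x ^ outside_below {j \<in> T. a < j} R * y ^ outside_above {j \<in> T. a < j} R *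
       (\<Sum>A\<in>arc_systems {#i \<in># S. i \<noteq> a#} (T - R). x ^ crossings A * y ^ nestings A))"
proof -
  let ?V = "{j \<in> T. a < j}" and ?S = "{#i \<in># S. i \<noteq> a#}"
  let ?w = "\<lambda>A. x ^ crossings A * y ^ nestings A"
  have split: "?w (A \<union> {a} \<times> R) = x ^ outside_below ?V R * y ^ outside_above ?V R * ?w A"
    if R: "R \<in> k_subsets ?V (count S a)" and A: "A \<in> arc_systems ?S (T - R)" for R A
  proof -
    have "\<forall>e\<in>A. fst e < a"
      using arc_systems_mem[OF A] max by force
    then show ?thesis
      using crossings_insert_block[OF A T] nestings_insert_block[OF A T] R
      by (simp add: k_subsets_def power_add mult_ac)
  qed
  have "(\<Sum>A\<in>arc_systems S T. ?w A) =
      (\<Sum>(R, A)\<in>(SIGMA R:k_subsets ?V (count S a). arc_systems ?S (T - R)). ?w (A \<union> {a} \<times> R))"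
    using sum.reindex_bij_betw[OF bij_betw_arc_systems_block[OF T], of ?w]
    by (simp add: case_prod_unfold)
  also have "\<dots> = (\<Sum>R\<in>k_subsets ?V (count S a). \<Sum>A\<in>arc_systems ?S (T - R). ?w (A \<union> {a} \<times> R))"
    using T by (intro sum.Sigma[symmetric]) (auto simp: finite_k_subsets finite_arc_systems)
  also have "\<dots> = (\<Sum>R\<in>k_subsets ?V (count S a).
      x ^ outside_below ?V R * y ^ outside_above ?V R * (\<Sum>A\<in>arc_systems ?S (T - R). ?w A))"
    by (simp add: split sum_distrib_left)
  finally show ?thesis .
qed

definition avail :: "'a::linorder multiset \<Rightarrow> 'a set \<Rightarrow> 'a \<Rightarrow> int" where
  "avail S T a = int (card {j \<in> T. j > a}) - int (size (filter_mset (\<lambda>j. j > a) S))"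

lemma avail_max: "\<forall>i\<in>#S. i \<le> a \<Longrightarrow> avail S T a = int (card {j \<in> T. a < j})"
  by (auto simp: avail_def)

lemma avail_remove_block:
  assumes "finite T" "R \<subseteq> {j \<in> T. a < j}" "card R = count S a" "c < a"
  shows "avail {#i \<in># S. i \<noteq> a#} (T - R) c = avail S T c"
proof -
  have "{j \<in> T. c < j} = {j \<in> T - R. c < j} \<union> R" "{j \<in> T - R. c < j} \<inter> R = {}"
    using assms(2,4) by auto
  then have "card {j \<in> T. c < j} = card {j \<in> T - R. c < j} + count S a"
    using assms(1,3) finite_subset[OF assms(2)] by (simp add: card_Un_disjoint)
  moreover have "{#j \<in># S. c < j#} = {#j \<in># {#i \<in># S. i \<noteq> a#}. c < j#} + replicate_mset (count S a) a"
    using assms(4) by (intro multiset_eqI) auto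
  ultimately show ?thesis
    by (simp add: avail_def)
qed

lemma prod_avail_remove_max:
  assumes "finite T" "\<forall>i\<in>#S. i \<le> a" "R \<subseteq> {j \<in> T. a < j}" "card R = count S a"
  shows "(\<Prod>c\<in>set_mset {#i \<in># S. i \<noteq> a#}. g (avail {#i \<in># S. i \<noteq> a#} (T - R) c) (count {#i \<in># S. i \<noteq> a#} c)) =
    (\<Prod>c\<in>set_mset {#i \<in># S. i \<noteq> a#}. g (avail S T c) (count S c))"
proof (rule prod.cong[OF refl])
  fix c assume "c \<in># {#i \<in># S. i \<noteq> a#}"
  then have "c < a" "count {#i \<in># S. i \<noteq> a#} c = count S c"
    using assms(2) by (auto simp: order.order_iff_strict)
  then show "g (avail {#i \<in># S. i \<noteq> a#} (T - R) c) (count {#i \<in># S. i \<noteq> a#} c) =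
      g (avail S T c) (count S c)"
    using avail_remove_block[OF assms(1,3,4)] by simp
qed

theorem sum_arc_systems:
  fixes x y :: "'b::comm_semiring_1" and S :: "'a::linorder multiset"
  assumes "finite T" "card T = size S"
  shows "(\<Sum>A\<in>arc_systems S T. x ^ crossings A * y ^ nestings A) =
    (\<Prod>a\<in>set_mset S. homog_gauss x y (nat (avail S T a)) (count S a))"
  using assms
proof (induction "size S" arbitrary: S T rule: less_induct)
  case less
  show ?case
  proof (cases "S = {#}")
    case True
    then have "arc_systems S T = {{}}"
      using less.prems by (auto simp: arc_systems_def mset_set_empty_iff)
    then show ?thesis
      using True by (simp add: crossings_def nestings_def)
  next
    case False
    define a where "a = Max (set_mset S)"
    let ?V = "{j \<in> T. a < j}" and ?S = "{#i \<in># S. i \<noteq> a#}"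
    have a: "a \<in># S" "\<forall>i\<in>#S. i \<le> a"
      using False by (auto simp: a_def)
    have size: "size S = size ?S + count S a"
      using arg_cong[OF multiset_partition[of S "\<lambda>i. i \<noteq> a"], of size]
      by (simp add: filter_eq_replicate_mset)
    let ?P = "\<Prod>c\<in>set_mset ?S. homog_gauss x y (nat (avail S T c)) (count S c)"
    have rest: "(\<Sum>A\<in>arc_systems ?S (T - R). x ^ crossings A * y ^ nestings A) = ?P"
      if R: "R \<in> k_subsets ?V (count S a)" for R
    proof -
      have RV: "R \<subseteq> ?V" and card_R: "card R = count S a"
        using R by (auto simp: k_subsets_def)
      then have "R \<subseteq> T"
        by auto
      then have "card (T - R) = size ?S" "size ?S < size S"
        using less.prems a(1) size card_R finite_subset[OF \<open>R \<subseteq> T\<close> less.prems(1)]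
        by (simp_all add: card_Diff_subset)
      then show ?thesis
        using less.hyps[of ?S "T - R"] less.prems(1) prod_avail_remove_max[OF less.prems(1) a(2) RV card_R]
        by simp
    qed
    have "(\<Sum>A\<in>arc_systems S T. x ^ crossings A * y ^ nestings A) =
        (\<Sum>R\<in>k_subsets ?V (count S a). x ^ outside_below ?V R * y ^ outside_above ?V R * ?P)"
      unfolding sum_arc_systems_remove_max[OF less.prems(1) a(2)] by (rule sum.cong) (simp_all add: rest)
    also have "\<dots> = homog_gauss x y (card ?V) (count S a) * ?P"
      using less.prems(1) by (simp add: sum_k_subsets_outside sum_distrib_right[symmetric])
    also have "\<dots> = (\<Prod>c\<in>insert a (set_mset ?S). homog_gauss x y (nat (avail S T c)) (count S c))"
      by (simp add: avail_max[OF a(2)])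
    also have "insert a (set_mset ?S) = set_mset S"
      using a(1) by auto
    finally show ?thesis .
  qed
qed

section \<open>Linked partitions and their arcs\<close>

(* An element that is the right end of an arc but the left end of none lies in the block of
  that arc, so it does not start a block of its own. *)
definition blocks_of_arcs :: "nat \<Rightarrow> (nat \<times> nat) set \<Rightarrow> nat set set" where
  "blocks_of_arcs n A =
    (\<lambda>i. insert i (A `` {i})) ` {i \<in> {1..n}. A `` {i} \<noteq> {} \<or> i \<notin> snd ` A}"

context
  fixes n :: nat and \<pi> :: "nat set set"
  assumes lp: "linked_partition n \<pi>"
begin

lemma linked_partition_block: "E \<in> \<pi> \<Longrightarrow> finite E \<and> Min E \<in> E \<and> E \<subseteq> {1..n}"
  using lp finite_subset[of E "{1..n}"] by (auto simp: linked_partition_def)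

lemma linked_partition_overlap:
  "E \<in> \<pi> \<Longrightarrow> F \<in> \<pi> \<Longrightarrow> E \<noteq> F \<Longrightarrow> i \<in> E \<Longrightarrow> i \<in> F \<Longrightarrow>
    (i = Min E \<and> card E > 1 \<and> i \<noteq> Min F) \<or> (i = Min F \<and> card F > 1 \<and> i \<noteq> Min E)"
  using lp unfolding linked_partition_def nearly_disjoint_def by blast

lemma linked_partition_Min_inj: "E \<in> \<pi> \<Longrightarrow> F \<in> \<pi> \<Longrightarrow> Min E = Min F \<Longrightarrow> E = F"
  using linked_partition_overlap[of E F "Min E"] linked_partition_block by fastforce

lemma mem_arcs_iff: "p \<in> arcs \<pi> \<longleftrightarrow> (\<exists>E\<in>\<pi>. fst p = Min E \<and> snd p \<in> E - {Min E})"
proof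
  assume "\<exists>E\<in>\<pi>. fst p = Min E \<and> snd p \<in> E - {Min E}"
  then obtain E where E: "E \<in> \<pi>" "fst p = Min E" "snd p \<in> E - {Min E}"
    by blast
  have "card {Min E, snd p} \<le> card E"
    using linked_partition_block[OF E(1)] E(3) by (intro card_mono) auto
  then show "p \<in> arcs \<pi>"
    using E by (cases p) (auto simp: arcs_def)
qed (auto simp: arcs_def)

lemma arcs_Image_Min:
  assumes E: "E \<in> \<pi>"
  shows "arcs \<pi> `` {Min E} = E - {Min E}"
proof (intro equalityI subsetI)
  fix j assume "j \<in> arcs \<pi> `` {Min E}"
  then obtain F where "F \<in> \<pi>" "Min E = Min F" "j \<in> F - {Min F}"
    using mem_arcs_iff[of "(Min E, j)"] by auto
  then show "j \<in> E - {Min E}"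
    using linked_partition_Min_inj[OF E] by metis
next
  fix j assume "j \<in> E - {Min E}"
  then show "j \<in> arcs \<pi> `` {Min E}"
    using E mem_arcs_iff[of "(Min E, j)"] by auto
qed

lemma Min_in_rights:
  assumes E: "E \<in> \<pi>" and right: "Min E \<in> snd ` arcs \<pi>"
  shows "E - {Min E} \<noteq> {}"
proof
  assume singleton: "E - {Min E} = {}"
  obtain F where F: "F \<in> \<pi>" "Min E \<in> F - {Min F}"
    using right by (auto simp: mem_arcs_iff)
  then have "E \<noteq> F"
    by blast
  then have "card E > 1"
    using linked_partition_overlap[OF E F(1) _ _, of "Min E"] linked_partition_block[OF E] F(2)
    by blast
  moreover have "card E \<le> card {Min E}"
    using singleton by (intro card_mono) auto
  ultimately show False
    by simp
qed

lemma arcs_well_formed: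
  "finite (arcs \<pi>) \<and> (\<forall>e\<in>arcs \<pi>. fst e < snd e) \<and> inj_on snd (arcs \<pi>) \<and>
    arcs \<pi> \<subseteq> {1..n} \<times> {1..n}"
proof (intro conjI)
  show sub: "arcs \<pi> \<subseteq> {1..n} \<times> {1..n}"
    using linked_partition_block by (force simp: mem_arcs_iff)
  then show "finite (arcs \<pi>)"
    by (rule finite_subset) simp
  show "\<forall>e\<in>arcs \<pi>. fst e < snd e"
    using linked_partition_block by (fastforce simp: mem_arcs_iff order.strict_iff_order)
  show "inj_on snd (arcs \<pi>)"
    using linked_partition_overlap by (fastforce simp: inj_on_def mem_arcs_iff prod_eq_iff)
qed

lemma block_with_Min:
  assumes "i \<in> {1..n}" "arcs \<pi> `` {i} \<noteq> {} \<or> i \<notin> snd ` arcs \<pi>"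
  obtains F where "F \<in> \<pi>" "Min F = i"
proof (cases "arcs \<pi> `` {i} = {}")
  case True
  have "i \<in> \<Union>\<pi>"
    using lp assms(1) by (simp add: linked_partition_def)
  then obtain E where E: "E \<in> \<pi>" "i \<in> E"
    by blast
  have "(Min E, i) \<notin> arcs \<pi>"
    using True assms(2) by force
  then have "i = Min E"
    using mem_arcs_iff[of "(Min E, i)"] E by auto
  then show ?thesis
    using E that by blast
next
  case False
  then obtain j where "(i, j) \<in> arcs \<pi>"
    by blast
  then show ?thesis
    using that mem_arcs_iff[of "(i, j)"] by auto
qed

lemma blocks_of_arcs_arcs: "blocks_of_arcs n (arcs \<pi>) = \<pi>"
proof (intro equalityI subsetI)
  fix B assume "B \<in> blocks_of_arcs n (arcs \<pi>)"
  then obtain i where i: "i \<in> {1..n}" "arcs \<pi> `` {i} \<noteq> {} \<or> i \<notin> snd ` arcs \<pi>"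
    and B: "B = insert i (arcs \<pi> `` {i})"
    by (auto simp: blocks_of_arcs_def)
  obtain F where F: "F \<in> \<pi>" "Min F = i"
    using block_with_Min[OF i] .
  then have "B = F"
    using B arcs_Image_Min[OF F(1)] linked_partition_block[OF F(1)] by auto
  then show "B \<in> \<pi>"
    using F(1) by simp
next
  fix E assume E: "E \<in> \<pi>"
  have "E = insert (Min E) (arcs \<pi> `` {Min E})"
    using arcs_Image_Min[OF E] linked_partition_block[OF E] by auto
  moreover have "Min E \<in> {1..n}"
    using linked_partition_block[OF E] by auto
  moreover have "arcs \<pi> `` {Min E} \<noteq> {} \<or> Min E \<notin> snd ` arcs \<pi>"
    by (metis Min_in_rights[OF E] arcs_Image_Min[OF E])
  ultimately show "E \<in> blocks_of_arcs n (arcs \<pi>)"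
    unfolding blocks_of_arcs_def by (intro image_eqI[where x = "Min E"]) simp_all
qed

end

context
  fixes n :: nat and A :: "(nat \<times> nat) set"
  assumes lt: "\<forall>e\<in>A. fst e < snd e" and inj: "inj_on snd A"
    and bounded: "A \<subseteq> {1..n} \<times> {1..n}"
begin

lemma Image_arcs_gt:
  assumes "j \<in> A `` {i}"
  shows "i < j \<and> j \<in> {1..n}"
proof -
  have "(i, j) \<in> A"
    using assms by simp
  then show ?thesis
    using lt bounded by auto
qed

lemma finite_Image_arcs: "finite (A `` {i})"
proof (rule finite_subset)
  show "A `` {i} \<subseteq> {1..n}"
    using Image_arcs_gt by blast
qed simp

lemma Min_insert_Image_arcs: "Min (insert i (A `` {i})) = i"
  using Image_arcs_gt by (intro Min_insert2[OF finite_Image_arcs]) (simp add: less_imp_le)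

lemma card_insert_Image_arcs: "A `` {i} \<noteq> {} \<Longrightarrow> card (insert i (A `` {i})) > 1"
proof -
  assume "A `` {i} \<noteq> {}"
  moreover have "i \<notin> A `` {i}"
    using Image_arcs_gt by blast
  ultimately show ?thesis
    using finite_Image_arcs by (simp add: card_gt_0_iff)
qed

lemma Union_blocks_of_arcs: "\<Union> (blocks_of_arcs n A) = {1..n}"
proof (intro equalityI subsetI)
  fix k assume "k \<in> \<Union> (blocks_of_arcs n A)"
  then show "k \<in> {1..n}"
    using Image_arcs_gt by (auto simp: blocks_of_arcs_def)
next
  fix k assume k: "k \<in> {1..n}"
  show "k \<in> \<Union> (blocks_of_arcs n A)"
  proof (cases "k \<in> snd ` A")
    case False
    then have "insert k (A `` {k}) \<in> blocks_of_arcs n A"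
      using k by (auto simp: blocks_of_arcs_def)
    then show ?thesis by blast
  next
    case True
    then obtain i where "(i, k) \<in> A"
      by force
    then have "i \<in> {1..n}" "A `` {i} \<noteq> {}" "k \<in> insert i (A `` {i})"
      using bounded by auto
    moreover from this have "insert i (A `` {i}) \<in> blocks_of_arcs n A"
      unfolding blocks_of_arcs_def by (intro imageI) simp
    ultimately show ?thesis by blast
  qed
qed

lemma blocks_of_arcs_nearly_disjoint:
  assumes "E \<in> blocks_of_arcs n A" "F \<in> blocks_of_arcs n A" "E \<noteq> F"
  shows "nearly_disjoint E F"
proof -
  obtain i k where i: "A `` {i} \<noteq> {} \<or> i \<notin> snd ` A" "E = insert i (A `` {i})"
    and k: "A `` {k} \<noteq> {} \<or> k \<notin> snd ` A" "F = insert k (A `` {k})" and "i \<noteq> k"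
    using assms by (auto simp: blocks_of_arcs_def)
  show ?thesis
    unfolding nearly_disjoint_def i(2) k(2) Min_insert_Image_arcs
  proof
    fix m assume m: "m \<in> insert i (A `` {i}) \<inter> insert k (A `` {k})"
    consider "m = i" | "m = k" | "m \<noteq> i" "m \<noteq> k"
      by blast
    then show "m = i \<and> 1 < card (insert i (A `` {i})) \<and> m \<noteq> k \<or>
        m = k \<and> 1 < card (insert k (A `` {k})) \<and> m \<noteq> i"
    proof cases
      case 1
      then have "i \<in> snd ` A"
        using m \<open>i \<noteq> k\<close> by force
      then show ?thesis
        using 1 i(1) \<open>i \<noteq> k\<close> card_insert_Image_arcs by blast
    next
      case 2
      then have "k \<in> snd ` A"
        using m \<open>i \<noteq> k\<close> by force
      then show ?thesis
        using 2 k(1) \<open>i \<noteq> k\<close> card_insert_Image_arcs by blast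
    next
      case 3
      then have "(i, m) \<in> A" "(k, m) \<in> A"
        using m by auto
      then have "(i, m) = (k, m)"
        using inj by (metis inj_onD snd_conv)
      then show ?thesis
        using \<open>i \<noteq> k\<close> by simp
    qed
  qed
qed

lemma blocks_of_arcs_linked_partition: "linked_partition n (blocks_of_arcs n A)"
proof -
  have "E \<noteq> {} \<and> E \<subseteq> {1..n}" if "E \<in> blocks_of_arcs n A" for E
    using that Image_arcs_gt by (auto simp: blocks_of_arcs_def)
  then show ?thesis
    using Union_blocks_of_arcs blocks_of_arcs_nearly_disjoint by (simp add: linked_partition_def)
qed

lemma arcs_blocks_of_arcs: "arcs (blocks_of_arcs n A) = A"
proof (intro equalityI subsetI)
  fix p assume "p \<in> arcs (blocks_of_arcs n A)"
  then obtain i where "fst p = i" "snd p \<in> A `` {i}"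
    unfolding mem_arcs_iff[OF blocks_of_arcs_linked_partition]
    by (auto simp: blocks_of_arcs_def Min_insert_Image_arcs)
  then show "p \<in> A"
    by (cases p) simp
next
  fix p assume p: "p \<in> A"
  then have "insert (fst p) (A `` {fst p}) \<in> blocks_of_arcs n A"
    using bounded by (force simp: blocks_of_arcs_def)
  moreover have "snd p \<in> A `` {fst p} - {fst p}"
    using p lt by (cases p) auto
  ultimately show "p \<in> arcs (blocks_of_arcs n A)"
    unfolding mem_arcs_iff[OF blocks_of_arcs_linked_partition]
    by (metis Diff_iff insertCI Min_insert_Image_arcs)
qed

end

lemma arcs_mem_arc_systems:
  assumes "T \<subseteq> {1..n}" "\<pi> \<in> LP n S T"
  shows "arcs \<pi> \<in> arc_systems S T"
proof -
  have lp: "linked_partition n \<pi>" and "lefts \<pi> = S" and rights: "rights \<pi> = mset_set T"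
    using assms(2) by (auto simp: LP_def)
  have "finite T"
    using assms(1) by (rule finite_subset) simp
  then have "snd ` arcs \<pi> = T"
    using rights arcs_well_formed[OF lp] arg_cong[of _ _ set_mset]
    by (force simp: rights_def image_mset_mset_set)
  then show ?thesis
    using arcs_well_formed[OF lp] \<open>lefts \<pi> = S\<close> by (simp add: arc_systems_def lefts_def)
qed

lemma blocks_of_arcs_mem_LP:
  assumes "set_mset S \<subseteq> {1..n}" "T \<subseteq> {1..n}" "A \<in> arc_systems S T"
  shows "blocks_of_arcs n A \<in> LP n S T"
proof -
  have "A \<subseteq> {1..n} \<times> {1..n}"
    using arc_systems_mem[OF assms(3)] assms(1,2) by fastforce
  then show ?thesis
    using assms(3) blocks_of_arcs_linked_partition arcs_blocks_of_arcs
    by (simp add: LP_def arc_systems_def lefts_def rights_def image_mset_mset_set)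
qed

lemma bij_betw_arcs_LP:
  assumes "set_mset S \<subseteq> {1..n}" "T \<subseteq> {1..n}"
  shows "bij_betw arcs (LP n S T) (arc_systems S T)"
proof (rule bij_betw_byWitness[where f' = "blocks_of_arcs n"])
  show "\<forall>\<pi>\<in>LP n S T. blocks_of_arcs n (arcs \<pi>) = \<pi>"
    by (simp add: LP_def blocks_of_arcs_arcs)
  have "A \<subseteq> {1..n} \<times> {1..n}" if "A \<in> arc_systems S T" for A
    using arc_systems_mem[OF that] assms by fastforce
  then show "\<forall>A\<in>arc_systems S T. arcs (blocks_of_arcs n A) = A"
    by (auto simp: arc_systems_def arcs_blocks_of_arcs)
  show "arcs ` LP n S T \<subseteq> arc_systems S T"
    using arcs_mem_arc_systems[OF assms(2)] by blast
  show "blocks_of_arcs n ` arc_systems S T \<subseteq> LP n S T"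
    using blocks_of_arcs_mem_LP[OF assms] by blast
qed

lemma cr2_eq_crossings: "cr2 \<pi> = crossings (arcs \<pi>)"
  by (simp add: cr2_def crossings_def crosses_def)

lemma ne2_eq_nestings: "ne2 \<pi> = nestings (arcs \<pi>)"
  by (simp add: ne2_def nestings_def nests_def)

lemma sum_LP_crossings_nestings:
  fixes x y :: "'a::comm_semiring_1"
  assumes "set_mset S \<subseteq> {1..n}" "T \<subseteq> {1..n}" "card T = size S"
  shows "(\<Sum>\<pi>\<in>LP n S T. x ^ cr2 \<pi> * y ^ ne2 \<pi>) =
    (\<Prod>a\<in>set_mset S. homog_gauss x y (nat (avail S T a)) (count S a))"
  using sum.reindex_bij_betw[OF bij_betw_arcs_LP[OF assms(1,2)], of "\<lambda>A. x ^ crossings A * y ^ nestings A"]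
    sum_arc_systems[OF finite_subset[OF assms(2) finite_atLeastAtMost] assms(3)]
  by (simp add: cr2_eq_crossings ne2_eq_nestings)

theorem theorem3p6:
  fixes n :: nat and S :: "nat multiset" and T :: "nat set" and x y :: real
  assumes "n \<ge> 1"
    and "set_mset S \<subseteq> {1..n}"
    and "T \<subseteq> {1..n}"
    and "card T = size S"
    and "y \<noteq> 0"
  defines "h \<equiv> (\<lambda>a. int (card {j \<in> T. j > a}) - int (size (filter_mset (\<lambda>j. j > a) S)))"
  shows "(\<Sum>\<pi>\<in>LP n S T. x ^ cr2 \<pi> * y ^ ne2 \<pi>) = (\<Sum>\<pi>\<in>LP n S T. x ^ ne2 \<pi> * y ^ cr2 \<pi>)
    \<and> (\<Sum>\<pi>\<in>LP n S T. x ^ ne2 \<pi> * y ^ cr2 \<pi>) =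
      (\<Prod>a\<in>set_mset S.
         y powi (int (count S a) * h a - int (count S a) ^ 2) *
         (if h a < 0 then 0 else poly (qbinom (nat (h a)) (count S a)) (x / y)))"
proof -
  have sum_LP: "(\<Sum>\<pi>\<in>LP n S T. u ^ cr2 \<pi> * v ^ ne2 \<pi>) =
      (\<Prod>a\<in>set_mset S. homog_gauss u v (nat (h a)) (count S a))" for u v :: real
    using sum_LP_crossings_nestings[OF assms(2-4)] by (simp add: avail_def h_def)
  have factor: "homog_gauss x y (nat (h a)) (count S a) =
      y powi (int (count S a) * h a - int (count S a) ^ 2) *
      (if h a < 0 then 0 else poly (qbinom (nat (h a)) (count S a)) (x / y))" if "a \<in># S" for a
    using assms(5) that by (intro homog_gauss_eq_qbinom) simp_all
  have "(\<Sum>\<pi>\<in>LP n S T. x ^ ne2 \<pi> * y ^ cr2 \<pi>) = (\<Sum>\<pi>\<in>LP n S T. y ^ cr2 \<pi> * x ^ ne2 \<pi>)"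
    by (simp only: mult.commute)
  also have "\<dots> = (\<Prod>a\<in>set_mset S. homog_gauss x y (nat (h a)) (count S a))"
    unfolding sum_LP by (rule prod.cong[OF refl homog_gauss_commute])
  finally show ?thesis
    using sum_LP[of x y] prod.cong[OF refl factor] by simp
qed

end
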